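(* Let $P\subset\mathbb{R}^d$ be a full-dimensional lattice polytope with codegree $a$ satisfying $P=\lfloor aP\rfloor+\{P\}$. Then there exists an integer $K\ge1$ (depending on $P$) such that for every integer $k\ge K$ the polytope $kP$ is nearly Gorenstein.
   Context: $\mathbf{k}$ is an infinite field. $P$ has facet presentation $P=\{x: n_F(x)\ge -h_F\ \forall \text{ facets } F\}$ with $n_F\in(\mathbb{Z}^d)^*$ primitive inner normals and $h_F\in\mathbb{Z}$. The codegree is $a=\min\{k\in\mathbb{Z}_{\ge1}: \mathrm{int}(kP)\cap\mathbb{Z}^d\ne\varnothing\}$. For a lattice polytope $Q$, $\lfloor Q\rfloor=\mathrm{conv}(\mathrm{int}(Q)\cap\mathbb{Z}^d)$. The remainder polytope is $\{P\}=\mathrm{conv}\{x\in\mathbb{Z}^d: n_F(x)\ge (a-1)h_F-1\ \forall F\}$. $+$ denotes Minkowski sum. A lattice polytope $Q$ is nearly Gorenstein if its Ehrhart ring $A(Q)=\mathbf{k}[\mathbf{t}^xs^k: k\in\mathbb{N}, x\in kQ\cap\mathbb{Z}^d]$ (graded by $k$, graded maximal ideal $\mathbf{m}$, canonical module $\omega$) satisfies $\mathbf{m}\subseteq \mathrm{tr}(\omega)=\sum_{\phi\in\mathrm{Hom}(\omega,A(Q))}\phi(\omega)$. *)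

theory Defs
  imports "HOL-Analysis.Analysis"
begin

definition lat :: "int ^ 'd \<Rightarrow> real ^ 'd" where
  "lat z = (\<chi> i. real_of_int (z $ i))"

definition lattice_points :: "(real ^ 'd) set" where
  "lattice_points = range lat"

definition lattice_polytope :: "(real ^ 'd) set \<Rightarrow> bool" where
  "lattice_polytope P \<longleftrightarrow> (\<exists>V. finite V \<and> V \<subseteq> lattice_points \<and> P = convex hull V)"

definition dil :: "real \<Rightarrow> (real ^ 'd) set \<Rightarrow> (real ^ 'd) set" where
  "dil c Q = (\<lambda>x. c *\<^sub>R x) ` Q"

definition minkowski_sum :: "(real ^ 'd) set \<Rightarrow> (real ^ 'd) set \<Rightarrow> (real ^ 'd) set" where
  "minkowski_sum A B = {x + y | x y. x \<in> A \<and> y \<in> B}"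

definition pair :: "int ^ 'd \<Rightarrow> real ^ 'd \<Rightarrow> real" where
  "pair n x = (\<Sum>i\<in>UNIV. real_of_int (n $ i) * x $ i)"

definition primitive :: "int ^ 'd \<Rightarrow> bool" where
  "primitive n \<longleftrightarrow> (\<forall>m::int. (\<forall>i. m dvd n $ i) \<longrightarrow> \<bar>m\<bar> = 1)"

definition codegree :: "(real ^ 'd) set \<Rightarrow> nat" where
  "codegree P = (LEAST k::nat. k \<ge> 1 \<and> interior (dil (real k) P) \<inter> lattice_points \<noteq> {})"

definition lfloor_poly :: "(real ^ 'd) set \<Rightarrow> (real ^ 'd) set" where
  "lfloor_poly Q = convex hull (interior Q \<inter> lattice_points)"

text \<open>remainder polytope {P} for facet data (I, n, h) and codegree a\<close>
definition remainder_poly :: "'f set \<Rightarrow> ('f \<Rightarrow> int ^ 'd) \<Rightarrow> ('f \<Rightarrow> int) \<Rightarrow> nat \<Rightarrow> (real ^ 'd) set" where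
  "remainder_poly I n h a = convex hull
     {x \<in> lattice_points. \<forall>F\<in>I. pair (n F) x \<ge> real_of_int ((int a - 1) * h F - 1)}"

section \<open>Ehrhart ring, realised as finitely supported functions on Z^d x Z\<close>

type_synonym 'd mon = "(int ^ 'd) \<times> int"

definition supp :: "('d mon \<Rightarrow> 'k::zero) \<Rightarrow> 'd mon set" where
  "supp f = {u. f u \<noteq> 0}"

text \<open>monomials t^x s^k with x in kP\<close>
definition ehr_monoid :: "(real ^ 'd) set \<Rightarrow> 'd mon set" where
  "ehr_monoid Q = {(z, k). k \<ge> 0 \<and> lat z \<in> dil (real_of_int k) Q}"

definition ehr_interior :: "(real ^ 'd) set \<Rightarrow> 'd mon set" where
  "ehr_interior Q = {(z, k). k \<ge> 1 \<and> lat z \<in> interior (dil (real_of_int k) Q)}"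

definition ehrhart_ring :: "'k::field itself \<Rightarrow> (real ^ 'd) set \<Rightarrow> ('d mon \<Rightarrow> 'k) set" where
  "ehrhart_ring T Q = {f. finite (supp f) \<and> supp f \<subseteq> ehr_monoid Q}"

text \<open>multiplication in the semigroup ring (convolution)\<close>
definition conv :: "(('d::finite) mon \<Rightarrow> 'k::field) \<Rightarrow> ('d mon \<Rightarrow> 'k) \<Rightarrow> ('d mon \<Rightarrow> 'k)" where
  "conv f g = (\<lambda>(z, k). \<Sum>v\<in>supp f. f v * g (z - fst v, k - snd v))"

definition max_ideal :: "'k::field itself \<Rightarrow> (real ^ 'd) set \<Rightarrow> ('d mon \<Rightarrow> 'k) set" where
  "max_ideal T Q = {f \<in> ehrhart_ring T Q. \<forall>u\<in>supp f. snd u \<ge> 1}"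

text \<open>canonical module of the (normal) Ehrhart ring: the ideal spanned by the
  monomials in the interior of the cone (Danilov--Stanley)\<close>
definition canonical_module :: "'k::field itself \<Rightarrow> (real ^ 'd) set \<Rightarrow> ('d mon \<Rightarrow> 'k) set" where
  "canonical_module T Q = {f \<in> ehrhart_ring T Q. supp f \<subseteq> ehr_interior Q}"

definition hom_omega :: "'k::field itself \<Rightarrow> (real ^ 'd) set \<Rightarrow>
    (('d mon \<Rightarrow> 'k) \<Rightarrow> ('d mon \<Rightarrow> 'k)) set" where
  "hom_omega T Q = {\<phi>.
     (\<forall>f\<in>canonical_module T Q. \<phi> f \<in> ehrhart_ring T Q) \<and>
     (\<forall>f\<in>canonical_module T Q. \<forall>g\<in>canonical_module T Q. \<phi> (\<lambda>u. f u + g u) = (\<lambda>u. \<phi> f u + \<phi> g u)) \<and>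
     (\<forall>a\<in>ehrhart_ring T Q. \<forall>f\<in>canonical_module T Q. \<phi> (conv a f) = conv a (\<phi> f))}"

definition trace_omega :: "'k::field itself \<Rightarrow> (real ^ 'd) set \<Rightarrow> ('d mon \<Rightarrow> 'k) set" where
  "trace_omega T Q = {f. \<exists>(m::nat) \<phi>s fs.
     (\<forall>i<m. \<phi>s i \<in> hom_omega T Q \<and> fs i \<in> canonical_module T Q) \<and>
     f = (\<lambda>u. \<Sum>i<m. \<phi>s i (fs i) u)}"

definition nearly_gorenstein :: "'k::field itself \<Rightarrow> (real ^ 'd) set \<Rightarrow> bool" where
  "nearly_gorenstein T Q \<longleftrightarrow> max_ideal T Q \<subseteq> trace_omega T Q"

end

theory Submission
  imports Defs
begin

text \<open>If \<open>P = \<lfloor>aP\<rfloor> + {P}\<close>, every point of \<open>P\<close> is a convex combination of sums \<open>q + b\<close>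
  with \<open>q\<close> an interior lattice point of \<open>aP\<close> and \<open>b\<close> a lattice point of \<open>{P}\<close>, and by
  Caratheodory one such \<open>w = q + b\<close> carries weight at least \<open>1/(d+1)\<close>. So for a lattice
  point \<open>z\<close> of \<open>MP\<close> with \<open>M \<ge> a(d+1)\<close>, the lattice point \<open>y = z - b - (a-1)w\<close> lies in the
  interior of \<open>MP\<close>, while \<open>c = z - y = b + (a-1)w\<close> pairs to at least \<open>-1\<close> with every facet
  normal. Multiplication by \<open>t\<^sup>c\<close> then maps the canonical module, which is spanned by the
  interior monomials, into \<open>A(kP)\<close> and sends \<open>t\<^sup>y s\<^sup>j\<close> to \<open>t\<^sup>z s\<^sup>j\<close>. Hence for
  \<open>k \<ge> a(d+1)\<close> every monomial of positive degree of \<open>A(kP)\<close> lies in the trace of \<open>\<omega>\<close>.\<close>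

lemma pair_eq_inner_lat: "pair n x = lat n \<bullet> x"
  by (simp add: pair_def lat_def inner_vec_def)

lemma pair_lat: "pair n (lat z) = real_of_int (\<Sum>i\<in>UNIV. n $ i * z $ i)"
  by (simp add: pair_def lat_def)

lemma lat_add: "lat (a + b) = lat a + lat b"
  by (simp add: lat_def vec_eq_iff)

lemma lat_diff: "lat (a - b) = lat a - lat b"
  by (simp add: lat_def vec_eq_iff)

lemma lat_scaleR: "lat (c *s a) = real_of_int c *\<^sub>R lat a"
  by (simp add: lat_def vec_eq_iff)

lemma lat_eq_0_iff: "lat z = 0 \<longleftrightarrow> z = 0"
  by (simp add: lat_def vec_eq_iff)

lemma primitive_nonzero: "primitive n \<Longrightarrow> n \<noteq> 0"
  by (auto simp: primitive_def dest: spec[of _ 2])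

lemma dil_dil: "dil s (dil t P) = dil (s * t) P"
  by (simp add: dil_def image_image)

lemma lfloor_poly_dil_0: "lfloor_poly (dil 0 P) = {}"
proof -
  have "dil 0 P \<subseteq> {0}" by (auto simp: dil_def)
  then have "interior (dil 0 P) = {}"
    using interior_mono interior_singleton by blast
  then show ?thesis by (simp add: lfloor_poly_def)
qed

lemma minkowski_sum_eq_set_plus: "minkowski_sum A B = A + B"
  by (auto simp: minkowski_sum_def set_plus_def)

section \<open>A heavy point in Caratheodory's theorem\<close>

lemma exists_weight_ge_inverse_card:
  fixes u :: "'a \<Rightarrow> real" and N :: nat
  assumes "finite S" "sum u S = 1" "card S \<le> N"
  shows "\<exists>w\<in>S. 1 / real N \<le> u w"
proof (rule ccontr)
  assume "\<not> ?thesis"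
  then have "sum u S < (\<Sum>w\<in>S. 1 / real N)"
    using assms(2) by (intro sum_strict_mono[OF assms(1)]) auto
  also have "\<dots> \<le> 1"
    using assms(3) by (cases "N = 0") (simp_all add: divide_le_eq_1)
  finally show False
    using assms(2) by simp
qed

lemma convex_hull_heavy_point:
  fixes p :: "'a::euclidean_space"
  assumes "p \<in> convex hull W"
  obtains w \<mu> y where "w \<in> W" "1 / (DIM('a) + 1) \<le> \<mu>" "\<mu> \<le> 1" "y \<in> convex hull W"
    "p = \<mu> *\<^sub>R w + (1 - \<mu>) *\<^sub>R y"
proof -
  obtain S where S: "finite S" "S \<subseteq> W" "card S \<le> DIM('a) + 1" "p \<in> convex hull S"
    using assms caratheodory by blast
  obtain u where u: "\<forall>w\<in>S. 0 \<le> u w" "sum u S = 1" "(\<Sum>w\<in>S. u w *\<^sub>R w) = p"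
    using S(1,4) convex_hull_finite[of S] by auto
  obtain w where w: "w \<in> S" "1 / (DIM('a) + 1) \<le> u w"
    using exists_weight_ge_inverse_card[OF S(1) u(2) S(3)] by auto
  define S' where "S' = S - {w}"
  have rest_weight: "sum u S' = 1 - u w"
    using u(2) sum.remove[OF S(1) w(1), of u] by (simp add: S'_def)
  have rest_point: "(\<Sum>v\<in>S'. u v *\<^sub>R v) = p - u w *\<^sub>R w"
    using u(3) sum.remove[OF S(1) w(1), of "\<lambda>v. u v *\<^sub>R v"]
    by (simp add: S'_def eq_diff_eq add.commute)
  have "u w \<le> 1"
    using rest_weight u(1) sum_nonneg[of S' u] by (auto simp: S'_def)
  show thesis
  proof (cases "u w = 1")
    case True
    then have "\<forall>v\<in>S'. u v = 0"
      using rest_weight u(1) S(1) by (subst sum_nonneg_eq_0_iff[symmetric]) (auto simp: S'_def)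
    then have "p = w"
      using rest_point True by simp
    then show thesis
      using that[of w 1 w] w S(2) hull_inc[of w W] by auto
  next
    case False
    define y where "y = (\<Sum>v\<in>S'. (u v / (1 - u w)) *\<^sub>R v)"
    have "y \<in> convex hull W"
      unfolding y_def
    proof (rule convex_sum)
      show "sum (\<lambda>v. u v / (1 - u w)) S' = 1"
        using rest_weight False by (simp add: sum_divide_distrib[symmetric])
    qed (use S u \<open>u w \<le> 1\<close> in \<open>auto simp: S'_def intro: hull_inc\<close>)
    moreover have "(1 - u w) *\<^sub>R y = p - u w *\<^sub>R w"
      using False rest_point by (simp add: y_def scaleR_sum_right)
    ultimately show thesis
      using that[of w "u w" y] w S(2) \<open>u w \<le> 1\<close> by (auto simp: algebra_simps)
  qed
qed

section \<open>Shifts of the canonical module\<close>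

definition shift_into_monoid :: "(real ^ 'd) set \<Rightarrow> int ^ 'd \<Rightarrow> bool" where
  "shift_into_monoid Q c \<longleftrightarrow> (\<forall>(z, k)\<in>ehr_interior Q. (z + c, k) \<in> ehr_monoid Q)"

text \<open>\<open>shift_map c r\<close> is multiplication by the Laurent monomial \<open>r t\<^sup>c\<close>.\<close>

definition shift_map :: "int ^ 'd \<Rightarrow> 'k::field \<Rightarrow> ('d mon \<Rightarrow> 'k) \<Rightarrow> ('d mon \<Rightarrow> 'k)" where
  "shift_map c r f = (\<lambda>(z, k). r * f (z - c, k))"

definition monomial :: "'d mon \<Rightarrow> ('d mon \<Rightarrow> 'k::field)" where
  "monomial v = (\<lambda>u. if u = v then 1 else 0)"

lemma ehr_interior_subset_ehr_monoid: "ehr_interior Q \<subseteq> ehr_monoid Q"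
  unfolding ehr_interior_def ehr_monoid_def using interior_subset by fastforce

lemma supp_shift_map: "supp (shift_map c r f) \<subseteq> (\<lambda>(z, k). (z + c, k)) ` supp f"
proof
  fix u assume "u \<in> supp (shift_map c r f)"
  then obtain z k where "u = (z, k)" "(z - c, k) \<in> supp f"
    by (cases u) (auto simp: supp_def shift_map_def)
  then show "u \<in> (\<lambda>(z, k). (z + c, k)) ` supp f"
    by (auto intro: rev_image_eqI)
qed

lemma shift_map_in_hom_omega:
  fixes Q :: "(real ^ 'd) set"
  assumes "shift_into_monoid Q c"
  shows "shift_map c r \<in> hom_omega TYPE('k::field) Q"
  unfolding hom_omega_def
proof (intro CollectI conjI ballI)
  fix f :: "'d mon \<Rightarrow> 'k" assume "f \<in> canonical_module TYPE('k) Q"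
  then have fin: "finite (supp f)" and sub: "supp f \<subseteq> ehr_interior Q"
    by (auto simp: canonical_module_def ehrhart_ring_def)
  have "(\<lambda>(z, k). (z + c, k)) ` supp f \<subseteq> ehr_monoid Q"
    using sub assms by (auto simp: shift_into_monoid_def)
  then show "shift_map c r f \<in> ehrhart_ring TYPE('k) Q"
    unfolding ehrhart_ring_def using supp_shift_map[of c r f] fin finite_subset by blast
next
  fix f g :: "'d mon \<Rightarrow> 'k"
  show "shift_map c r (\<lambda>u. f u + g u) = (\<lambda>u. shift_map c r f u + shift_map c r g u)"
    by (auto simp: shift_map_def distrib_left)
next
  fix a f :: "'d mon \<Rightarrow> 'k"
  show "shift_map c r (conv a f) = conv a (shift_map c r f)"
    by (auto simp: shift_map_def conv_def sum_distrib_left algebra_simps intro!: sum.cong)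
qed

lemma monomial_in_canonical_module:
  fixes Q :: "(real ^ 'd) set"
  assumes "v \<in> ehr_interior Q"
  shows "monomial v \<in> canonical_module TYPE('k::field) Q"
proof -
  have "supp (monomial v :: 'd mon \<Rightarrow> 'k) = {v}"
    by (auto simp: supp_def monomial_def)
  then show ?thesis
    using assms ehr_interior_subset_ehr_monoid by (auto simp: canonical_module_def ehrhart_ring_def)
qed

lemma shift_map_monomial:
  "shift_map c r (monomial (z, k)) = (\<lambda>u. if u = (z + c, k) then r else 0)"
  by (auto simp: shift_map_def monomial_def fun_eq_iff)

lemma in_trace_omega_if_shifted_interior:
  fixes Q :: "(real ^ 'd) set" and f :: "'d mon \<Rightarrow> 'k::field"
  assumes fin: "finite (supp f)"
    and shifted: "\<forall>u\<in>supp f. \<exists>v\<in>ehr_interior Q. \<exists>c. shift_into_monoid Q c \<and> u = (fst v + c, snd v)"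
  shows "f \<in> trace_omega TYPE('k) Q"
proof -
  obtain V C where VC: "\<And>u. u \<in> supp f \<Longrightarrow>
      V u \<in> ehr_interior Q \<and> shift_into_monoid Q (C u) \<and> u = (fst (V u) + C u, snd (V u))"
    using shifted by metis
  define m where "m = card (supp f)"
  obtain g where g: "bij_betw g {..<m} (supp f)"
    using ex_bij_betw_nat_finite[OF fin] by (auto simp: m_def atLeast0LessThan)
  define \<phi>s where "\<phi>s = (\<lambda>i. shift_map (C (g i)) (f (g i)))"
  define fs where "fs = (\<lambda>i. monomial (V (g i)) :: 'd mon \<Rightarrow> 'k)"
  have g_supp: "g i \<in> supp f" if "i < m" for i
    using g that by (auto simp: bij_betw_def)
  have terms: "\<forall>i<m. \<phi>s i \<in> hom_omega TYPE('k) Q \<and> fs i \<in> canonical_module TYPE('k) Q"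
  proof (intro allI impI)
    fix i assume "i < m"
    then have "V (g i) \<in> ehr_interior Q" "shift_into_monoid Q (C (g i))"
      using VC g_supp by blast+
    then show "\<phi>s i \<in> hom_omega TYPE('k) Q \<and> fs i \<in> canonical_module TYPE('k) Q"
      by (simp add: \<phi>s_def fs_def shift_map_in_hom_omega monomial_in_canonical_module)
  qed
  have image: "\<phi>s i (fs i) = (\<lambda>u. if u = g i then f (g i) else 0)" if "i < m" for i
    using VC[OF g_supp[OF that]] by (cases "V (g i)") (simp add: \<phi>s_def fs_def shift_map_monomial)
  have "f = (\<lambda>u. \<Sum>i<m. \<phi>s i (fs i) u)"
  proof
    fix u
    have "(\<Sum>i<m. \<phi>s i (fs i) u) = (\<Sum>i<m. if u = g i then f (g i) else 0)"
      using image by simp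
    also have "\<dots> = (\<Sum>w\<in>supp f. if u = w then f w else 0)"
      using sum.reindex_bij_betw[OF g, of "\<lambda>w. if u = w then f w else 0"] by simp
    also have "\<dots> = f u"
      using fin by (cases "u \<in> supp f") (auto simp: supp_def)
    finally show "f u = (\<Sum>i<m. \<phi>s i (fs i) u)" by simp
  qed
  then show ?thesis
    unfolding trace_omega_def using terms by blast
qed

section \<open>Polytopes given by integral facet inequalities\<close>

locale halfspace_presentation =
  fixes P :: "(real ^ 'd) set" and I :: "'f set" and n :: "'f \<Rightarrow> int ^ 'd" and h :: "'f \<Rightarrow> int"
  assumes finite_I: "finite I"
    and P_eq: "P = {x. \<forall>F\<in>I. pair (n F) x \<ge> - real_of_int (h F)}"
    and normal_nonzero: "\<And>F. F \<in> I \<Longrightarrow> n F \<noteq> 0"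
begin

lemma mem_dil_iff:
  assumes "t > 0"
  shows "x \<in> dil t P \<longleftrightarrow> (\<forall>F\<in>I. - t * real_of_int (h F) \<le> pair (n F) x)"
proof -
  have "x \<in> dil t P \<longleftrightarrow> (1 / t) *\<^sub>R x \<in> P"
    using assms by (force simp: dil_def image_iff)
  also have "\<dots> \<longleftrightarrow> (\<forall>F\<in>I. - t * real_of_int (h F) \<le> pair (n F) x)"
    using assms by (simp add: P_eq pair_eq_inner_lat divide_simps mult.commute)
  finally show ?thesis .
qed

lemma interior_dil:
  assumes "t > 0"
  shows "interior (dil t P) = {x. \<forall>F\<in>I. - t * real_of_int (h F) < pair (n F) x}"
proof
  show "interior (dil t P) \<subseteq> {x. \<forall>F\<in>I. - t * real_of_int (h F) < pair (n F) x}"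
  proof (intro subsetI CollectI ballI)
    fix x F assume x: "x \<in> interior (dil t P)" and F: "F \<in> I"
    define v where "v = lat (n F)"
    have "v \<noteq> 0"
      using normal_nonzero[OF F] by (simp add: v_def lat_eq_0_iff)
    obtain e where e: "e > 0" "ball x e \<subseteq> dil t P"
      using x by (meson mem_interior)
    define y where "y = x - (e / 2 / norm v) *\<^sub>R v"
    have "y \<in> ball x e"
      using \<open>v \<noteq> 0\<close> e(1) by (simp add: y_def dist_norm)
    then have "- t * real_of_int (h F) \<le> v \<bullet> y"
      using e(2) mem_dil_iff[OF assms] F by (auto simp: v_def pair_eq_inner_lat)
    also have "v \<bullet> y = v \<bullet> x - e / 2 * norm v"
      using \<open>v \<noteq> 0\<close> by (simp add: y_def inner_diff_right dot_square_norm power2_eq_square)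
    also have "\<dots> < v \<bullet> x"
      using \<open>v \<noteq> 0\<close> e(1) by simp
    finally show "- t * real_of_int (h F) < pair (n F) x"
      by (simp add: v_def pair_eq_inner_lat)
  qed
next
  have "open {x. \<forall>F\<in>I. - t * real_of_int (h F) < pair (n F) x}"
    using finite_I by (simp add: pair_eq_inner_lat Collect_ball_eq open_INT open_halfspace_gt)
  moreover have "{x. \<forall>F\<in>I. - t * real_of_int (h F) < pair (n F) x} \<subseteq> dil t P"
    using mem_dil_iff[OF assms] by (auto intro: less_imp_le)
  ultimately show "{x. \<forall>F\<in>I. - t * real_of_int (h F) < pair (n F) x} \<subseteq> interior (dil t P)"
    by (rule interior_maximal[rotated])
qed

lemma lat_shift_interior_mem_dil:
  assumes m: "m > 0" and z: "lat z \<in> interior (dil (real_of_int m) P)"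
    and c: "\<forall>F\<in>I. -1 \<le> pair (n F) (lat c)"
  shows "lat (z + c) \<in> dil (real_of_int m) P"
  unfolding mem_dil_iff[OF of_int_pos[OF m]]
proof
  fix F assume F: "F \<in> I"
  have "- real_of_int m * real_of_int (h F) < pair (n F) (lat z)"
    using z F interior_dil[OF of_int_pos[OF m]] by auto
  then have "real_of_int (- m * h F) < real_of_int (\<Sum>i\<in>UNIV. n F $ i * z $ i)"
    by (simp add: pair_lat)
  then have "real_of_int (- m * h F + 1) \<le> real_of_int (\<Sum>i\<in>UNIV. n F $ i * z $ i)"
    unfolding of_int_less_iff of_int_le_iff by linarith
  then have "- real_of_int m * real_of_int (h F) + 1 \<le> pair (n F) (lat z)"
    by (simp add: pair_lat)
  moreover have "pair (n F) (lat (z + c)) = pair (n F) (lat z) + pair (n F) (lat c)"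
    by (simp add: lat_add pair_eq_inner_lat inner_add_right)
  ultimately show "- real_of_int m * real_of_int (h F) \<le> pair (n F) (lat (z + c))"
    using c F by auto
qed

lemma shift_into_monoid_dil:
  assumes k: "k > 0" and c: "\<forall>F\<in>I. -1 \<le> pair (n F) (lat c)"
  shows "shift_into_monoid (dil (real k) P) c"
  unfolding shift_into_monoid_def
proof (clarify)
  fix z j assume "(z, j) \<in> ehr_interior (dil (real k) P)"
  then have "j \<ge> 1" "lat z \<in> interior (dil (real_of_int (j * int k)) P)"
    by (simp_all add: ehr_interior_def dil_dil)
  then show "(z + c, j) \<in> ehr_monoid (dil (real k) P)"
    using lat_shift_interior_mem_dil[OF _ _ c, of "j * int k"] k
    by (simp add: ehr_monoid_def dil_dil)
qed

lemma mem_dil_heavy_summand: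
  assumes a: "a \<ge> 1"
    and decomp: "P = minkowski_sum (lfloor_poly (dil (real a) P)) (remainder_poly I n h a)"
    and M: "real a * (real CARD('d) + 1) \<le> M"
    and x: "x \<in> dil M P"
  obtains q b \<mu> p where "q \<in> interior (dil (real a) P) \<inter> lattice_points"
    "b \<in> lattice_points" "\<forall>F\<in>I. real_of_int ((int a - 1) * h F - 1) \<le> pair (n F) b"
    "q + b \<in> P" "p \<in> P" "real a \<le> M * \<mu>" "\<mu> \<le> 1"
    "x = (M * \<mu>) *\<^sub>R (q + b) + (M * (1 - \<mu>)) *\<^sub>R p"
proof -
  define L where "L = interior (dil (real a) P) \<inter> lattice_points"
  define R where "R = {x \<in> lattice_points. \<forall>F\<in>I. pair (n F) x \<ge> real_of_int ((int a - 1) * h F - 1)}"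
  have P_hull: "P = convex hull (L + R)"
    using decomp by (simp add: lfloor_poly_def remainder_poly_def minkowski_sum_eq_set_plus
        convex_hull_set_plus L_def R_def)
  have "0 < real a * (real CARD('d) + 1)"
    using a by simp
  then have M_pos: "M > 0"
    using M by linarith
  have "(1 / M) *\<^sub>R x \<in> P"
    using x M_pos by (auto simp: dil_def)
  then obtain w \<mu> p where w: "w \<in> L + R" and \<mu>: "1 / (DIM(real ^ 'd) + 1) \<le> \<mu>" "\<mu> \<le> 1"
    and p: "p \<in> P" and x_eq: "(1 / M) *\<^sub>R x = \<mu> *\<^sub>R w + (1 - \<mu>) *\<^sub>R p"
    unfolding P_hull by (rule convex_hull_heavy_point)
  obtain q b where q: "q \<in> L" and b: "b \<in> R" and w_eq: "w = q + b"
    using w by (auto simp: set_plus_def)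
  have w_P: "w \<in> P"
    unfolding P_hull using w by (rule hull_inc)
  have "real a = real a * (real CARD('d) + 1) * (1 / (real CARD('d) + 1))"
    by simp
  also have "\<dots> \<le> M * \<mu>"
    using M \<mu>(1) M_pos by (intro mult_mono) (auto simp: add.commute)
  finally have heavy: "real a \<le> M * \<mu>" .
  have "x = (M * \<mu>) *\<^sub>R w + (M * (1 - \<mu>)) *\<^sub>R p"
    using arg_cong[OF x_eq, of "scaleR M"] M_pos by (simp add: scaleR_add_right)
  then show thesis
    using q b w_P p heavy \<mu>(2) that[where q = q and b = b and \<mu> = \<mu> and p = p]
    by (simp add: w_eq L_def R_def)
qed

lemma exists_interior_lattice_point_near:
  assumes a: "a \<ge> 1"
    and decomp: "P = minkowski_sum (lfloor_poly (dil (real a) P)) (remainder_poly I n h a)"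
    and M: "real a * (real CARD('d) + 1) \<le> M"
    and z: "lat z \<in> dil M P"
  obtains y where "lat y \<in> interior (dil M P)" "\<forall>F\<in>I. -1 \<le> pair (n F) (lat (z - y))"
proof -
  obtain q b \<mu> p where q: "q \<in> interior (dil (real a) P) \<inter> lattice_points"
    and b: "b \<in> lattice_points" "\<forall>F\<in>I. real_of_int ((int a - 1) * h F - 1) \<le> pair (n F) b"
    and w_P: "q + b \<in> P" and p: "p \<in> P" and heavy: "real a \<le> M * \<mu>" and \<mu>: "\<mu> \<le> 1"
    and z_eq: "lat z = (M * \<mu>) *\<^sub>R (q + b) + (M * (1 - \<mu>)) *\<^sub>R p"
    by (rule mem_dil_heavy_summand[OF a decomp M z])
  have "0 < real a * (real CARD('d) + 1)"
    using a by simp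
  then have M_pos: "M > 0"
    using M by linarith
  obtain zq zb where zq: "q = lat zq" and zb: "b = lat zb"
    using q b by (auto simp: lattice_points_def)
  define w where "w = q + b"
  define y where "y = z - zb - (int a - 1) *s (zq + zb)"
  have lat_y: "lat y = q + (M * \<mu> - real a) *\<^sub>R w + (M * (1 - \<mu>)) *\<^sub>R p"
    using z_eq by (simp add: y_def w_def lat_diff lat_add lat_scaleR zq zb of_nat_diff algebra_simps)
  have lat_z_y: "lat (z - y) = b + (real a - 1) *\<^sub>R w"
    by (simp add: y_def w_def lat_diff lat_add lat_scaleR zq zb algebra_simps)
  have "\<forall>F\<in>I. - M * real_of_int (h F) < pair (n F) (lat y) \<and> -1 \<le> pair (n F) (lat (z - y))"
  proof
    fix F assume F: "F \<in> I"
    define \<phi> where "\<phi> = (\<lambda>x. lat (n F) \<bullet> x)"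
    define H where "H = real_of_int (h F)"
    have in_P: "- H \<le> \<phi> x" if "x \<in> P" for x
      using that F by (simp add: P_eq \<phi>_def H_def pair_eq_inner_lat)
    have \<phi>w: "- H \<le> \<phi> w"
      unfolding w_def using in_P w_P .
    have \<phi>q: "- real a * H < \<phi> q"
      using q F a by (simp add: interior_dil \<phi>_def H_def pair_eq_inner_lat)
    have \<phi>b: "(real a - 1) * H - 1 \<le> \<phi> b"
      using b(2) F a by (auto simp: \<phi>_def H_def pair_eq_inner_lat of_nat_diff)
    have "(M * \<mu> - real a) * (- H) \<le> (M * \<mu> - real a) * \<phi> w"
      using heavy \<phi>w by (intro mult_left_mono) auto
    moreover have "(M * (1 - \<mu>)) * (- H) \<le> (M * (1 - \<mu>)) * \<phi> p"
      using M_pos \<mu> in_P[OF p] by (intro mult_left_mono) auto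
    moreover have "\<phi> (lat y) = \<phi> q + (M * \<mu> - real a) * \<phi> w + (M * (1 - \<mu>)) * \<phi> p"
      by (simp add: lat_y \<phi>_def inner_add_right)
    ultimately have "- M * H < \<phi> (lat y)"
      using \<phi>q by (simp add: algebra_simps)
    moreover have "(real a - 1) * (- H) \<le> (real a - 1) * \<phi> w"
      using a \<phi>w by (intro mult_left_mono) auto
    moreover have "\<phi> (lat (z - y)) = \<phi> b + (real a - 1) * \<phi> w"
      by (simp add: lat_z_y \<phi>_def inner_add_right)
    ultimately show "- M * real_of_int (h F) < pair (n F) (lat y) \<and> -1 \<le> pair (n F) (lat (z - y))"
      using \<phi>b by (simp add: \<phi>_def H_def pair_eq_inner_lat algebra_simps)
  qed
  then show thesis
    using that[of y] interior_dil[OF M_pos] by auto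
qed

lemma nearly_gorenstein_dil:
  assumes a: "a \<ge> 1"
    and decomp: "P = minkowski_sum (lfloor_poly (dil (real a) P)) (remainder_poly I n h a)"
    and k: "a * (CARD('d) + 1) \<le> k"
  shows "nearly_gorenstein TYPE('k::field) (dil (real k) P)"
  unfolding nearly_gorenstein_def
proof
  define Q where "Q = dil (real k) P"
  have "0 < a * (CARD('d) + 1)"
    using a by simp
  then have k_pos: "k > 0"
    using k by linarith
  fix f :: "'d mon \<Rightarrow> 'k" assume f: "f \<in> max_ideal TYPE('k) (dil (real k) P)"
  show "f \<in> trace_omega TYPE('k) (dil (real k) P)"
    unfolding Q_def[symmetric]
  proof (rule in_trace_omega_if_shifted_interior)
    show "finite (supp f)"
      using f by (simp add: max_ideal_def ehrhart_ring_def)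
    show "\<forall>u\<in>supp f. \<exists>v\<in>ehr_interior Q. \<exists>c. shift_into_monoid Q c \<and> u = (fst v + c, snd v)"
    proof
      fix u assume u: "u \<in> supp f"
      obtain z j where u_eq: "u = (z, j)"
        by (cases u)
      have j: "j \<ge> 1" and z: "lat z \<in> dil (real_of_int (j * int k)) P"
        using f u by (auto simp: u_eq max_ideal_def ehrhart_ring_def ehr_monoid_def dil_dil Q_def)
      have "real a * (real CARD('d) + 1) \<le> real k"
        using of_nat_mono[OF k] by (simp add: algebra_simps)
      also have "\<dots> \<le> real_of_int (j * int k)"
        using j mult_right_mono[of 1 "real_of_int j" "real k"] by simp
      finally obtain y where y: "lat y \<in> interior (dil (real_of_int (j * int k)) P)"
        and near: "\<forall>F\<in>I. -1 \<le> pair (n F) (lat (z - y))"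
        using exists_interior_lattice_point_near[OF a decomp _ z] by blast
      have "(y, j) \<in> ehr_interior Q"
        using y j by (simp add: ehr_interior_def dil_dil Q_def)
      moreover have "shift_into_monoid Q (z - y)"
        unfolding Q_def using k_pos near by (rule shift_into_monoid_dil)
      ultimately show "\<exists>v\<in>ehr_interior Q. \<exists>c. shift_into_monoid Q c \<and> u = (fst v + c, snd v)"
        using u_eq by force
    qed
  qed
qed

end

theorem theorem3p8:
  fixes P :: "(real ^ 'd) set"
    and I :: "'f set" and n :: "'f \<Rightarrow> int ^ 'd" and h :: "'f \<Rightarrow> int"
  assumes infinite_field: "infinite (UNIV :: 'k::field set)"
    and lp: "lattice_polytope P"
    and full_dim: "interior P \<noteq> {}"
    and finI: "finite I"
    and pres: "P = {x. \<forall>F\<in>I. pair (n F) x \<ge> - real_of_int (h F)}"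
    and prim: "\<forall>F\<in>I. primitive (n F)"
    and facets: "\<forall>F\<in>I. {x \<in> P. pair (n F) x = - real_of_int (h F)} facet_of P"
    and decomp: "P = minkowski_sum (lfloor_poly (dil (real (codegree P)) P))
                                   (remainder_poly I n h (codegree P))"
  shows "\<exists>K::nat. K \<ge> 1 \<and> (\<forall>k::nat. k \<ge> K \<longrightarrow> nearly_gorenstein TYPE('k) (dil (real k) P))"
proof -
  interpret halfspace_presentation P I n h
    using finI pres prim by unfold_locales (auto dest: primitive_nonzero)
  define a where "a = codegree P"
  have "a \<noteq> 0"
  proof
    assume "a = 0"
    then have "P = {}"
      using decomp by (simp add: a_def lfloor_poly_dil_0 minkowski_sum_def)
    then show False
      using full_dim by simp
  qed
  then show ?thesis
    using nearly_gorenstein_dil[OF _ decomp[folded a_def]]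
    by (intro exI[of _ "a * (CARD('d) + 1)"]) auto
qed

end
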